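(* For every $1 \leq q \leq Q$, \[ (Z-Z'_q)_- \leq 8Kt\,\mathbf{1}_{R_q}, \] where $(a)_-:=\max\{-a,0\}$.
   Context: Let $d \geq 2$. Let $\omega=(\omega(x))_{x \in \mathbb{Z}^d}$ be independent random variables with a common law on $\mathbb{N}_0$, not concentrated at $0$. Independently of $\omega$, let $(S_k(x,\ell))_{k \geq 0}$, $x \in \mathbb{Z}^d$, $\ell \in \mathbb{N}$, be independent simple random walks on $\mathbb{Z}^d$ with $S_0(x,\ell)=x$. For $x,y \in \mathbb{Z}^d$ let $\tau(x,y):=\inf\{k \geq 0: S_k(x,\ell)=y \text{ for some } 1 \leq \ell \leq \omega(x)\}$ ($:=\infty$ if $\omega(x)=0$). Let $C_0\in(0,\infty)$ be a constant for which there are $0<c,c'<\infty$, $0<a<1$ with $P(T(0,x)\ge s\mid\omega(0)\ge 1)\le c\,e^{-c's^{a}}$ for all $x\in\mathbb{Z}^d$ and $s\ge C_0\|x\|_1$, where $T(x,y):=\inf\{\sum_{i=0}^{m-1}\tau(x_i,x_{i+1}): m \geq 1,\ x=x_0,\dots,x_m=y\}$. Fix $\gamma>0$ and a constant $K>d(C_0+\gamma+1)$. For $t>0$ define $\sigma_t(x,y)$ by: $\sigma_t(x,y):=4Kt$ if $\|x-y\|_\infty\le t$ and $\tau(x,y)>4Kt$; $\sigma_t(x,y):=4K\|x-y\|_\infty$ if $\|x-y\|_\infty>t$; $\sigma_t(x,y):=\tau(x,y)$ otherwise; and $T_t(x,y):=\inf\{\sum_{i=0}^{m-1}\sigma_t(x_i,x_{i+1}):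 m\ge 1,\ x=x_0,\dots,x_m=y\}$. Fix $x\in\mathbb{Z}^d\setminus\{0\}$ and $t>0$. Tile $\mathbb{Z}^d$ with copies $\Lambda_q$, $q\in\mathbb{N}$, of $(-t/2,t/2]^d$, each centered at a point of $\mathbb{Z}^d$, so that each site lies in exactly one box, and let $U_q:=((\omega(z))_{z\in\Lambda_q},(S_\cdot(z,\ell))_{z\in\Lambda_q,\ell\in\mathbb{N}})$. Number the boxes so that $Z:=T_t(0,x)$ is a function $T_t(0,x,U_1,\dots,U_Q)$ of $U_1,\dots,U_Q$ for some finite $Q$. Let $(U'_q)_{q=1}^Q$ be independent copies of $(U_q)_{q=1}^Q$ and $Z'_q:=T_t(0,x,U_1,\dots,U_{q-1},U'_q,U_{q+1},\dots,U_Q)$. Let $\pi_t(0,x)=(0=x_0,x_1,\dots,x_m=x)$ be a sequence with $T_t(0,x)=\sum_{i=0}^{m-1}\sigma_t(x_i,x_{i+1})$, chosen by a deterministic tie-breaking rule, and let $R_q$ be the event that $\pi_t(0,x)$ intersects $\Lambda_q$. *)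

theory Defs
  imports "HOL-Analysis.Analysis"
begin

type_synonym 'd site = "int ^ 'd"

definition linf :: "('d::finite) site \<Rightarrow> 'd site \<Rightarrow> int" where
  "linf z w = Max (range (\<lambda>i. \<bar>z $ i - w $ i\<bar>))"

definition l1 :: "('d::finite) site \<Rightarrow> 'd site \<Rightarrow> int" where
  "l1 z w = (\<Sum>i\<in>UNIV. \<bar>z $ i - w $ i\<bar>)"

text \<open>A realization of the walks: S z l k = S_k(z,l); each is a nearest-neighbour path
  started at z (the sample paths of simple random walks).\<close>
definition walk_paths :: "(('d::finite) site \<Rightarrow> nat \<Rightarrow> nat \<Rightarrow> 'd site) \<Rightarrow> bool" where
  "walk_paths S \<longleftrightarrow> (\<forall>z l. S z l 0 = z \<and> (\<forall>k. l1 (S z l k) (S z l (Suc k)) = 1))"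

definition tau :: "(('d::finite) site \<Rightarrow> nat) \<Rightarrow> ('d site \<Rightarrow> nat \<Rightarrow> nat \<Rightarrow> 'd site)
    \<Rightarrow> 'd site \<Rightarrow> 'd site \<Rightarrow> enat" where
  "tau \<omega> S x y =
     (if \<exists>k l. 1 \<le> l \<and> l \<le> \<omega> x \<and> S x l k = y
      then enat (LEAST k. \<exists>l. 1 \<le> l \<and> l \<le> \<omega> x \<and> S x l k = y)
      else \<infinity>)"

definition sigma_t :: "real \<Rightarrow> real \<Rightarrow> (('d::finite) site \<Rightarrow> nat) \<Rightarrow> ('d site \<Rightarrow> nat \<Rightarrow> nat \<Rightarrow> 'd site)
    \<Rightarrow> 'd site \<Rightarrow> 'd site \<Rightarrow> real" where
  "sigma_t K t \<omega> S x y =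
     (if real_of_int (linf x y) > t then 4 * K * real_of_int (linf x y)
      else (case tau \<omega> S x y of
              enat k \<Rightarrow> (if real k > 4 * K * t then 4 * K * t else real k)
            | \<infinity> \<Rightarrow> 4 * K * t))"

definition path_cost :: "real \<Rightarrow> real \<Rightarrow> (('d::finite) site \<Rightarrow> nat) \<Rightarrow> ('d site \<Rightarrow> nat \<Rightarrow> nat \<Rightarrow> 'd site)
    \<Rightarrow> 'd site list \<Rightarrow> real" where
  "path_cost K t \<omega> S xs = sum_list (map (\<lambda>(a, b). sigma_t K t \<omega> S a b) (zip xs (tl xs)))"

definition is_seq :: "('d::finite) site \<Rightarrow> 'd site \<Rightarrow> 'd site list \<Rightarrow> bool" where
  "is_seq x y xs \<longleftrightarrow> length xs \<ge> 2 \<and> hd xs = x \<and> last xs = y"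

definition T_t :: "real \<Rightarrow> real \<Rightarrow> (('d::finite) site \<Rightarrow> nat) \<Rightarrow> ('d site \<Rightarrow> nat \<Rightarrow> nat \<Rightarrow> 'd site)
    \<Rightarrow> 'd site \<Rightarrow> 'd site \<Rightarrow> real" where
  "T_t K t \<omega> S x y = Inf {path_cost K t \<omega> S xs | xs. is_seq x y xs}"

definition box :: "real \<Rightarrow> ('d::finite) site \<Rightarrow> 'd site set" where
  "box t c = {z. \<forall>i. - t / 2 < real_of_int (z $ i - c $ i) \<and> real_of_int (z $ i - c $ i) \<le> t / 2}"

definition repl_omega :: "('d site set) \<Rightarrow> ('d site \<Rightarrow> nat) \<Rightarrow> ('d site \<Rightarrow> nat) \<Rightarrow> 'd site \<Rightarrow> nat" where
  "repl_omega A \<omega> \<omega>' = (\<lambda>z. if z \<in> A then \<omega>' z else \<omega> z)"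

definition repl_S :: "('d site set) \<Rightarrow> ('d site \<Rightarrow> nat \<Rightarrow> nat \<Rightarrow> 'd site)
    \<Rightarrow> ('d site \<Rightarrow> nat \<Rightarrow> nat \<Rightarrow> 'd site) \<Rightarrow> 'd site \<Rightarrow> nat \<Rightarrow> nat \<Rightarrow> 'd site" where
  "repl_S A S S' = (\<lambda>z. if z \<in> A then S' z else S z)"

end

theory Submission
  imports Defs
begin

text \<open>Let \<pi> be an optimal sequence for the original data and B the resampled box. If \<pi> avoids B,
  every step of \<pi> starts outside B and so keeps its cost after resampling. Otherwise cut \<pi>
  between its first visit u and its last visit v of B and jump directly from u to v: since B has
  sup-diameter at most t, the new step u v costs at most 4Kt, the step leaving v can grow by at
  most 4Kt, and all other kept steps start outside B.\<close>

definition chain_cost :: "('a \<Rightarrow> 'a \<Rightarrow> real) \<Rightarrow> 'a list \<Rightarrow> real" where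
  "chain_cost f xs = sum_list (map (\<lambda>(a, b). f a b) (zip xs (tl xs)))"

lemma path_cost_eq_chain_cost: "path_cost K t \<omega> S xs = chain_cost (sigma_t K t \<omega> S) xs"
  by (simp add: path_cost_def chain_cost_def)

lemma chain_cost_Cons_Cons: "chain_cost f (a # b # xs) = f a b + chain_cost f (b # xs)"
  by (simp add: chain_cost_def)

lemma chain_cost_singleton: "chain_cost f [a] = 0"
  by (simp add: chain_cost_def)

lemma chain_cost_append: "chain_cost f (xs @ y # ys) = chain_cost f (xs @ [y]) + chain_cost f (y # ys)"
proof (induction xs)
  case Nil
  then show ?case by (simp add: chain_cost_singleton)
next
  case (Cons a xs)
  then show ?case by (cases xs) (simp_all add: chain_cost_Cons_Cons)
qed

lemma chain_cost_nonneg: "(\<And>a b. f a b \<ge> 0) \<Longrightarrow> chain_cost f xs \<ge> 0"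
  unfolding chain_cost_def by (rule sum_list_nonneg) auto

lemma chain_cost_cong:
  "(\<And>a b. a \<in> set (butlast xs) \<Longrightarrow> f a b = g a b) \<Longrightarrow> chain_cost f xs = chain_cost g xs"
proof (induction xs rule: induct_list012)
  case (3 a b xs)
  then have "chain_cost f (b # xs) = chain_cost g (b # xs)"
    by (metis butlast.simps(2) in_set_butlastD list.set_intros(2))
  moreover have "f a b = g a b" using "3.prems" by simp
  ultimately show ?case by (simp add: chain_cost_Cons_Cons)
qed (simp_all add: chain_cost_def)

lemma chain_cost_shortcut:
  assumes meets: "\<exists>z \<in> set xs. z \<in> B"
    and outside: "\<And>a b. a \<notin> B \<Longrightarrow> g a b = f a b"
    and step: "\<And>a b. g a b \<le> f a b + C"
    and inside: "\<And>u v. u \<in> B \<Longrightarrow> v \<in> B \<Longrightarrow> g u v \<le> C"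
    and f_nonneg: "\<And>a b. f a b \<ge> 0" and "C \<ge> 0"
  obtains ys where "length ys \<ge> 2" "hd ys = hd xs" "last ys = last xs"
    "chain_cost g ys \<le> chain_cost f xs + 2 * C"
proof -
  obtain pre u rest where xs: "xs = pre @ u # rest" and "u \<in> B" and pre: "\<forall>z \<in> set pre. z \<notin> B"
    using split_list_first_prop[OF meets] by blast
  obtain mid v post where rest: "u # rest = mid @ v # post" and "v \<in> B"
    and post: "\<forall>z \<in> set post. z \<notin> B"
    using split_list_last_prop[of "u # rest" "\<lambda>z. z \<in> B"] \<open>u \<in> B\<close> by auto
  define ys where "ys = pre @ u # v # post"
  have "hd ys = hd xs" unfolding ys_def xs by (cases pre) auto
  moreover have "last ys = last xs"
    unfolding ys_def xs by (metis rest append_Cons last_ConsR last_appendR list.distinct(1))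
  moreover have "length ys \<ge> 2" unfolding ys_def by simp
  moreover have "chain_cost g ys \<le> chain_cost f xs + 2 * C"
  proof -
    have pre_cost: "chain_cost g (pre @ [u]) = chain_cost f (pre @ [u])"
      by (rule chain_cost_cong) (use pre outside in auto)
    have post_cost: "chain_cost g (v # post) \<le> chain_cost f (v # post) + C"
    proof (cases post)
      case Nil
      then show ?thesis using \<open>C \<ge> 0\<close> by (simp add: chain_cost_singleton)
    next
      case (Cons w post')
      have "chain_cost g post = chain_cost f post"
        by (rule chain_cost_cong) (use post outside in \<open>auto dest: in_set_butlastD\<close>)
      then show ?thesis using Cons step[of v w] by (simp add: chain_cost_Cons_Cons)
    qed
    have "chain_cost g ys = chain_cost g (pre @ [u]) + g u v + chain_cost g (v # post)"
      by (simp add: ys_def chain_cost_append[of g pre u "v # post"] chain_cost_Cons_Cons)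
    moreover have "chain_cost f xs
        = chain_cost f (pre @ [u]) + chain_cost f (mid @ [v]) + chain_cost f (v # post)"
      using chain_cost_append[of f pre u rest] chain_cost_append[of f mid v post]
      by (simp add: xs rest)
    ultimately show ?thesis
      using pre_cost post_cost inside[OF \<open>u \<in> B\<close> \<open>v \<in> B\<close>]
        chain_cost_nonneg[of f "mid @ [v]", OF f_nonneg]
      by linarith
  qed
  ultimately show ?thesis using that by blast
qed

lemma sigma_t_nonneg: "K > 0 \<Longrightarrow> t > 0 \<Longrightarrow> sigma_t K t \<omega> S a b \<ge> 0"
  by (auto simp: sigma_t_def split: enat.splits)

lemma sigma_t_le_if_close:
  "K > 0 \<Longrightarrow> t > 0 \<Longrightarrow> real_of_int (linf a b) \<le> t \<Longrightarrow> sigma_t K t \<omega> S a b \<le> 4 * K * t"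
  by (auto simp: sigma_t_def split: enat.splits)

text \<open>Far steps cost 4K times their length regardless of the data; near steps cost at most 4Kt.\<close>
lemma sigma_t_le_sigma_t_add:
  assumes "K > 0" "t > 0"
  shows "sigma_t K t \<omega> S a b \<le> sigma_t K t \<omega>' S' a b + 4 * K * t"
proof (cases "real_of_int (linf a b) > t")
  case True
  then show ?thesis using assms by (simp add: sigma_t_def)
next
  case False
  then show ?thesis
    using sigma_t_le_if_close[of K t a b \<omega> S] sigma_t_nonneg[of K t \<omega>' S' a b] assms by simp
qed

lemma sigma_t_repl_outside:
  assumes "a \<notin> A"
  shows "sigma_t K t (repl_omega A \<omega> \<omega>') (repl_S A S S') a b = sigma_t K t \<omega> S a b"
proof -
  have "tau (repl_omega A \<omega> \<omega>') (repl_S A S S') a b = tau \<omega> S a b"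
    using assms by (auto simp: tau_def repl_omega_def repl_S_def)
  then show ?thesis by (simp add: sigma_t_def)
qed

lemma linf_box_le:
  assumes "u \<in> box t c" "v \<in> box t c"
  shows "real_of_int (linf u v) \<le> t"
proof -
  have "\<bar>u $ i - v $ i\<bar> \<le> t" for i
  proof -
    have "- t / 2 < real_of_int (u $ i - c $ i)" "real_of_int (u $ i - c $ i) \<le> t / 2"
         "- t / 2 < real_of_int (v $ i - c $ i)" "real_of_int (v $ i - c $ i) \<le> t / 2"
      using assms by (auto simp: box_def)
    then show ?thesis by auto
  qed
  moreover have "linf u v \<in> range (\<lambda>i. \<bar>u $ i - v $ i\<bar>)"
    unfolding linf_def by (rule Max_in) auto
  ultimately show ?thesis by auto
qed

lemma T_t_le_path_cost:
  assumes "K > 0" "t > 0" "is_seq x y xs"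
  shows "T_t K t \<omega> S x y \<le> path_cost K t \<omega> S xs"
  unfolding T_t_def
proof (rule cInf_lower)
  show "path_cost K t \<omega> S xs \<in> {path_cost K t \<omega> S xs | xs. is_seq x y xs}"
    using assms(3) by blast
  show "bdd_below {path_cost K t \<omega> S xs | xs. is_seq x y xs}"
    by (rule bdd_belowI[of _ 0])
      (auto simp: path_cost_eq_chain_cost intro: chain_cost_nonneg sigma_t_nonneg assms)
qed

lemma T_t_repl_box_le:
  assumes K: "K > 0" and t: "t > 0" and \<pi>: "is_seq x y \<pi>"
    and geodesic: "path_cost K t \<omega> S \<pi> = T_t K t \<omega> S x y"
  shows "T_t K t (repl_omega (box t c) \<omega> \<omega>') (repl_S (box t c) S S') x y
         \<le> T_t K t \<omega> S x y + (if \<exists>z \<in> set \<pi>. z \<in> box t c then 8 * K * t else 0)"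
proof -
  define B where "B = box t c"
  define f where "f = sigma_t K t \<omega> S"
  define g where "g = sigma_t K t (repl_omega B \<omega> \<omega>') (repl_S B S S')"
  have outside: "g a b = f a b" if "a \<notin> B" for a b
    unfolding g_def f_def using sigma_t_repl_outside[OF that] by simp
  have lower: "T_t K t (repl_omega B \<omega> \<omega>') (repl_S B S S') x y \<le> chain_cost g ys"
    if "is_seq x y ys" for ys
    using T_t_le_path_cost[OF K t that] by (simp add: path_cost_eq_chain_cost g_def)
  have Z: "T_t K t \<omega> S x y = chain_cost f \<pi>"
    using geodesic by (simp add: path_cost_eq_chain_cost f_def)
  show ?thesis
  proof (cases "\<exists>z \<in> set \<pi>. z \<in> B")
    case False
    have "chain_cost g \<pi> = chain_cost f \<pi>"
      by (rule chain_cost_cong) (use False outside in \<open>auto dest: in_set_butlastD\<close>)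
    then show ?thesis using lower[OF \<pi>] Z False by (simp add: B_def)
  next
    case True
    have step: "g a b \<le> f a b + 4 * K * t" for a b
      unfolding g_def f_def using sigma_t_le_sigma_t_add K t by blast
    have inside: "g u v \<le> 4 * K * t" if "u \<in> B" "v \<in> B" for u v
      unfolding g_def using that K t linf_box_le[of u t c v] by (simp add: B_def sigma_t_le_if_close)
    have f_nonneg: "f a b \<ge> 0" for a b
      unfolding f_def using sigma_t_nonneg K t by blast
    obtain ys where "length ys \<ge> 2" "hd ys = hd \<pi>" "last ys = last \<pi>"
      and cost: "chain_cost g ys \<le> chain_cost f \<pi> + 2 * (4 * K * t)"
      using chain_cost_shortcut[of \<pi> B g f "4 * K * t", OF True outside step inside f_nonneg] K t
      by auto
    then have "is_seq x y ys" using \<pi> by (simp add: is_seq_def)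
    then show ?thesis using lower cost Z True by (fastforce simp: B_def)
  qed
qed

theorem lemma4p3:
  fixes \<omega> \<omega>' :: "('d::finite) site \<Rightarrow> nat"
    and S S' :: "'d site \<Rightarrow> nat \<Rightarrow> nat \<Rightarrow> 'd site"
    and C0 \<gamma> K t :: real
    and x :: "'d site"
    and c :: "nat \<Rightarrow> 'd site"
    and Q q :: nat
    and \<pi> :: "'d site list"
  assumes dim: "CARD('d) \<ge> 2"
    and C0: "C0 > 0" and gam: "\<gamma> > 0" and K: "K > real CARD('d) * (C0 + \<gamma> + 1)"
    and x0: "x \<noteq> 0" and t: "t > 0"
    and walks: "walk_paths S" and walks': "walk_paths S'"
    and tiling: "\<forall>z. \<exists>!p. p \<ge> 1 \<and> z \<in> box t (c p)"
    and Qdep: "\<forall>\<omega>'' S''. (\<forall>z \<in> (\<Union>p\<in>{1..Q}. box t (c p)). \<omega>'' z = \<omega> z \<and> S'' z = S z)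
                 \<longrightarrow> T_t K t \<omega>'' S'' 0 x = T_t K t \<omega> S 0 x"
    and q: "1 \<le> q" "q \<le> Q"
    and geo: "is_seq 0 x \<pi>" "path_cost K t \<omega> S \<pi> = T_t K t \<omega> S 0 x"
  shows "max (- (T_t K t \<omega> S 0 x
                 - T_t K t (repl_omega (box t (c q)) \<omega> \<omega>') (repl_S (box t (c q)) S S') 0 x)) 0
         \<le> 8 * K * t * (if (\<exists>z \<in> set \<pi>. z \<in> box t (c q)) then 1 else 0)"
proof -
  have "real CARD('d) * (C0 + \<gamma> + 1) > 0" using C0 gam by simp
  then have "K > 0" using K by linarith
  from T_t_repl_box_le[OF this t geo, of "c q" \<omega>' S'] show ?thesis
    using \<open>K > 0\<close> t by (cases "\<exists>z \<in> set \<pi>. z \<in> box t (c q)") (simp_all add: max_def)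
qed

end
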